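(* The subspace $\mathbf{\Pi}^{\textsf{FC}} $ is a graded sub-bialgebra of $(\mathbf{\Pi},\nabla_{\sqcup\!\sqcup},\iota_{\sqcup\!\sqcup},\Delta_\odot,\epsilon_\odot)$.
   Context: Let $\Bbbk$ be a field. For a word $w=w_1\cdots w_m$ of positive integers with $\max(w)\le n$, $[w,n]$ is the linear endomorphism of the $\Bbbk$-span of all words sending a word $v$ of length $n$ to $v_{w_1}\cdots v_{w_m}$ and other words to $0$, of degree $m$. These span a graded bialgebra with product $\nabla_{\sqcup\!\sqcup}([v,m]\otimes[w,n])=[v\sqcup\!\sqcup(w\uparrow m),m+n]$ ($\sqcup\!\sqcup$ the shuffle product, $w\uparrow m$ adds $m$ to each letter), unit $\iota_{\sqcup\!\sqcup}(1)=[\emptyset,0]$, coproduct $\Delta_\odot([w,n])=\sum_{i=0}^m[w_1\cdots w_i,n]\otimes[w_{i+1}\cdots w_m,n]$, counit $\epsilon_\odot([w,n])=1$ if $w=\emptyset$ and $0$ otherwise. For $\pi\in S_{n+1}$ with reduced words $\mathcal{R}(\pi)$ (for $s_i=(i,i+1)$), $[\pi]=\sum_{w\in\mathcal{R}(\pi)}[w,n]$; $\mathbf{\Pi}$ is the span of all $[\pi]$, a graded sub-bialgebra. A permutation is fully commutative if no reduced word contains a consecutive subword $i(i+1)i$ (equivalently, it is 321-avoiding). $\mathbf{\Pi}^{\textsf{FC}}$ is the span of $[\pi]$ over all fully commutative $\pi\in S_n$, $n\ge1$. *)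

theory Defs
  imports "HOL-Combinatorics.Combinatorics" "HOL-Library.Multiset"
begin

text \<open>Basis labels: a pair (w, n) stands for the operator [w,n].  The operators
[w,n] are linearly independent, so the ambient space spanned by them is modelled
as the free vector space over labels: finitely supported functions
label => field.  The tensor square is the free vector space over pairs of labels.\<close>

type_synonym label = "nat list \<times> nat"
type_synonym 'k vec = "label \<Rightarrow> 'k"
type_synonym 'k vec2 = "label \<times> label \<Rightarrow> 'k"

definition supp :: "('b \<Rightarrow> 'k::zero) \<Rightarrow> 'b set" where
  "supp x = {t. x t \<noteq> 0}"

definition is_label :: "label \<Rightarrow> bool" where
  "is_label b \<longleftrightarrow> (\<forall>i\<in>set (fst b). 1 \<le> i \<and> i \<le> snd b)"

definition ambient :: "'k::field vec set" where
  "ambient = {x. finite (supp x) \<and> (\<forall>b\<in>supp x. is_label b)}"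

definition bvec :: "nat list \<Rightarrow> nat \<Rightarrow> 'k::field vec" where
  "bvec w n = (\<lambda>t. if t = (w, n) then 1 else 0)"

definition lin_span :: "('b \<Rightarrow> 'k::field) set \<Rightarrow> ('b \<Rightarrow> 'k) set" where
  "lin_span G = {x. \<exists>A c. finite A \<and> A \<subseteq> G \<and> x = (\<lambda>t. \<Sum>g\<in>A. c g * g t)}"

fun shuffle :: "nat list \<Rightarrow> nat list \<Rightarrow> nat list multiset" where
  "shuffle [] w = {#w#}"
| "shuffle v [] = {#v#}"
| "shuffle (a # v) (b # w) =
     image_mset (Cons a) (shuffle v (b # w)) + image_mset (Cons b) (shuffle (a # v) w)"

definition shift :: "nat list \<Rightarrow> nat \<Rightarrow> nat list" where
  "shift w m = map (\<lambda>i. i + m) w"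

definition nabla_basis :: "label \<Rightarrow> label \<Rightarrow> 'k::field vec" where
  "nabla_basis b1 b2 = (\<lambda>(u, p).
     if p = snd b1 + snd b2
     then of_nat (count (shuffle (fst b1) (shift (fst b2) (snd b1))) u) else 0)"

definition nabla :: "'k::field vec \<Rightarrow> 'k vec \<Rightarrow> 'k vec" where
  "nabla x y = (\<lambda>t. \<Sum>b1\<in>supp x. \<Sum>b2\<in>supp y. x b1 * y b2 * nabla_basis b1 b2 t)"

definition unit_vec :: "'k::field vec" where
  "unit_vec = bvec [] 0"

definition delta_basis :: "label \<Rightarrow> 'k::field vec2" where
  "delta_basis b = (\<lambda>(a, c). of_nat (card {i. i \<le> length (fst b) \<and>
       a = (take i (fst b), snd b) \<and> c = (drop i (fst b), snd b)}))"

definition Delta :: "'k::field vec \<Rightarrow> 'k vec2" where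
  "Delta x = (\<lambda>t. \<Sum>b\<in>supp x. x b * delta_basis b t)"

definition tensor :: "'k::field vec \<Rightarrow> 'k vec \<Rightarrow> 'k vec2" where
  "tensor x y = (\<lambda>(a, c). x a * y c)"

definition tensor_sq :: "'k::field vec set \<Rightarrow> 'k vec2 set" where
  "tensor_sq S = lin_span {tensor x y | x y. x \<in> S \<and> y \<in> S}"

definition homog :: "nat \<Rightarrow> 'k::field vec \<Rightarrow> 'k vec" where
  "homog d x = (\<lambda>(w, n). if length w = d then x (w, n) else 0)"

definition perm_of_word :: "nat list \<Rightarrow> nat \<Rightarrow> nat" where
  "perm_of_word w = foldr (\<lambda>i f. transpose i (Suc i) \<circ> f) w id"

definition reduced_words :: "nat \<Rightarrow> (nat \<Rightarrow> nat) \<Rightarrow> nat list set" where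
  "reduced_words n p = {w. set w \<subseteq> {1..n} \<and> perm_of_word w = p \<and>
      (\<forall>w'. set w' \<subseteq> {1..n} \<and> perm_of_word w' = p \<longrightarrow> length w \<le> length w')}"

definition perm_vec :: "nat \<Rightarrow> (nat \<Rightarrow> nat) \<Rightarrow> 'k::field vec" where
  "perm_vec n p = (\<lambda>t. \<Sum>w\<in>reduced_words n p. bvec w n t)"

definition fully_commutative :: "nat \<Rightarrow> (nat \<Rightarrow> nat) \<Rightarrow> bool" where
  "fully_commutative n p \<longleftrightarrow>
     (\<forall>w\<in>reduced_words n p. \<not> (\<exists>u v i. w = u @ [i, Suc i, i] @ v))"

definition Pi_space :: "'k::field vec set" where
  "Pi_space = lin_span {perm_vec n p | n p. p permutes {1..Suc n}}"

definition PiFC :: "'k::field vec set" where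
  "PiFC = lin_span {perm_vec n p | n p. p permutes {1..Suc n} \<and> fully_commutative n p}"

text \<open>S is a graded sub-bialgebra of (Pi, nabla, iota, Delta, epsilon): a linear
  subspace of Pi, spanned by its homogeneous components, containing the unit,
  closed under the product, and with Delta(S) contained in S (x) S.  (The counit
  restricts automatically.)\<close>
definition graded_sub_bialgebra :: "'k::field vec set \<Rightarrow> bool" where
  "graded_sub_bialgebra S \<longleftrightarrow>
     S \<subseteq> Pi_space \<and>
     (\<lambda>t. 0) \<in> S \<and> (\<forall>x\<in>S. \<forall>y\<in>S. (\<lambda>t. x t + y t) \<in> S) \<and> (\<forall>c. \<forall>x\<in>S. (\<lambda>t. c * x t) \<in> S) \<and>
     (\<forall>x\<in>S. \<forall>d. homog d x \<in> S) \<and>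
     unit_vec \<in> S \<and>
     (\<forall>x\<in>S. \<forall>y\<in>S. nabla x y \<in> S) \<and>
     (\<forall>x\<in>S. Delta x \<in> tensor_sq S)"

end

theory Submission
  imports Defs
begin

text \<open>
  Reduced words are the words whose length is the number of inversions of their permutation,
  and by Matsumoto's theorem any two reduced words of a permutation are connected by
  commutation and braid moves.

  A word u occurs in the product of [pi] (pi in S_(m+1)) and [sigma] (sigma in S_(n+1)) iff its
  letters \<open>\<le> m\<close> form a reduced word of pi and its letters \<open>> m\<close>, lowered by m, a reduced
  word of sigma.  A braid move cannot mix the two alphabets without creating a factor a a in
  one of them, so this property, together with the two permutations, is invariant under braid
  moves, and it forces u to be reduced.  By Matsumoto's theorem the occurring words are
  therefore unions of full sets of reduced words: the product is a sum of [tau]'s.  A factor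
  i (i+1) i of a reduced word of such a tau lies in one alphabet (the other case again gives a
  factor a a), contradicting full commutativity of pi or sigma.

  Deconcatenating the reduced words of pi shows that the coproduct of [pi] is the sum of
  [sigma] (x) [rho] over the length-additive factorizations pi = sigma rho, and sigma and rho
  inherit full commutativity from pi.
\<close>

section \<open>Words, permutations and inversions\<close>

lemma perm_of_word_Nil [simp]: "perm_of_word [] = id"
  by (simp add: perm_of_word_def)

lemma perm_of_word_Cons [simp]:
  "perm_of_word (i # w) = transpose i (Suc i) \<circ> perm_of_word w"
  by (simp add: perm_of_word_def)

lemma perm_of_word_append: "perm_of_word (v @ w) = perm_of_word v \<circ> perm_of_word w"
  by (induction v) (simp_all add: comp_assoc)

lemma perm_of_word_snoc: "perm_of_word (w @ [i]) = perm_of_word w \<circ> transpose i (Suc i)"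
  by (simp add: perm_of_word_append)

lemma perm_of_word_permutes: "set w \<subseteq> {a..<b} \<Longrightarrow> perm_of_word w permutes {a..b}"
  by (induction w) (auto intro!: permutes_compose[rotated] permutes_swap_id)

lemma perm_of_word_permutes_bounded: "\<exists>b. perm_of_word w permutes {0..b}"
proof -
  obtain b where "\<forall>i\<in>set w. i < b"
    using finite_nat_set_iff_bounded[of "set w"] by auto
  then have "set w \<subseteq> {0..<b}" by auto
  then show ?thesis using perm_of_word_permutes by blast
qed

lemma inj_perm_of_word: "inj (perm_of_word w)"
  using perm_of_word_permutes_bounded permutes_inj by blast

definition inversions :: "(nat \<Rightarrow> nat) \<Rightarrow> (nat \<times> nat) set" where
  "inversions p = {(a, b). a < b \<and> p b < p a}"

definition inv_count :: "(nat \<Rightarrow> nat) \<Rightarrow> nat" where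
  "inv_count p = card (inversions p)"

lemma inversions_permutes_subset:
  assumes p: "p permutes {a..b}"
  shows "inversions p \<subseteq> {..b} \<times> {..b}"
proof (clarsimp simp: inversions_def)
  fix x y assume xy: "x < y" "p y < p x"
  have fixed: "z \<notin> {a..b} \<Longrightarrow> p z = z" for z
    using permutes_not_in[OF p] by blast
  have bounded: "p z \<le> b" if "z \<le> b" for z
    using permutes_in_image[OF p, of z] fixed[of z] that by (cases "a \<le> z") auto
  have "y \<le> b"
  proof (rule ccontr)
    assume "\<not> y \<le> b"
    then show False using xy bounded[of x] fixed[of x] fixed[of y] by (cases "x \<le> b") auto
  qed
  then show "x \<le> b \<and> y \<le> b" using xy by simp
qed

lemma finite_inversions_perm_of_word: "finite (inversions (perm_of_word w))"
proof -
  obtain b where "perm_of_word w permutes {0..b}"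
    using perm_of_word_permutes_bounded by blast
  then show ?thesis
    by (rule finite_subset[OF inversions_permutes_subset]) simp
qed

lemma inv_count_id [simp]: "inv_count id = 0"
proof -
  have "inversions id = {}" by (auto simp: inversions_def)
  then show ?thesis by (simp add: inv_count_def)
qed

lemma inversions_comp_transpose_ascent:
  assumes "p i < p (Suc i)"
  shows "inversions (p \<circ> transpose i (Suc i)) =
    insert (i, Suc i) (map_prod (transpose i (Suc i)) (transpose i (Suc i)) ` inversions p)"
proof -
  let ?s = "transpose i (Suc i)"
  have s_mono: "?s a < ?s b" if "a < b" "(a, b) \<noteq> (i, Suc i)" for a b
    using that by (auto simp: transpose_def)
  show ?thesis
  proof (intro equalityI subsetI)
    fix z assume z: "z \<in> inversions (p \<circ> ?s)"
    then obtain a b where ab: "z = (a, b)" "a < b" "p (?s b) < p (?s a)"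
      by (auto simp: inversions_def)
    show "z \<in> insert (i, Suc i) (map_prod ?s ?s ` inversions p)"
    proof (cases "z = (i, Suc i)")
      case False
      then have "(?s a, ?s b) \<in> inversions p"
        using ab s_mono by (auto simp: inversions_def)
      then show ?thesis using ab by (auto intro: image_eqI[of _ _ "(?s a, ?s b)"])
    qed simp
  next
    fix z assume "z \<in> insert (i, Suc i) (map_prod ?s ?s ` inversions p)"
    then consider "z = (i, Suc i)" | a b where "z = (?s a, ?s b)" "(a, b) \<in> inversions p"
      by auto
    then show "z \<in> inversions (p \<circ> ?s)"
    proof cases
      case (2 a b)
      then have "(a, b) \<noteq> (i, Suc i)" using assms by (auto simp: inversions_def)
      then show ?thesis using 2 s_mono by (auto simp: inversions_def)
    qed (use assms in \<open>simp add: inversions_def\<close>)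
  qed
qed

lemma inv_count_comp_transpose_ascent:
  assumes "finite (inversions p)" "p i < p (Suc i)"
  shows "inv_count (p \<circ> transpose i (Suc i)) = Suc (inv_count p)"
proof -
  let ?s = "transpose i (Suc i)"
  have "inj (map_prod ?s ?s)"
    using map_prod_inj_on[OF inj_transpose inj_transpose] by simp
  moreover have "(i, Suc i) \<notin> map_prod ?s ?s ` inversions p"
    by (auto simp: inversions_def transpose_def split: if_splits)
  ultimately show ?thesis
    using assms(1) by (simp add: inv_count_def inversions_comp_transpose_ascent[OF assms(2)]
        card_image inj_on_subset)
qed

lemma inv_count_snoc_ascent:
  "perm_of_word w i < perm_of_word w (Suc i) \<Longrightarrow>
    inv_count (perm_of_word (w @ [i])) = Suc (inv_count (perm_of_word w))"
  by (simp add: perm_of_word_snoc inv_count_comp_transpose_ascent finite_inversions_perm_of_word)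

lemma perm_of_word_neq_Suc: "perm_of_word w i \<noteq> perm_of_word w (Suc i)"
  using inj_perm_of_word[of w] by (metis injD n_not_Suc_n)

lemma inv_count_snoc_descent:
  assumes "perm_of_word w (Suc i) < perm_of_word w i"
  shows "inv_count (perm_of_word w) = Suc (inv_count (perm_of_word (w @ [i])))"
proof -
  have "perm_of_word (w @ [i]) i < perm_of_word (w @ [i]) (Suc i)"
    using assms by (simp add: perm_of_word_snoc)
  moreover have "perm_of_word (w @ [i, i]) = perm_of_word w"
    by (simp add: perm_of_word_append)
  ultimately show ?thesis
    using inv_count_snoc_ascent[of "w @ [i]" i] by simp
qed

lemma inversions_transpose_comp_subset:
  assumes "inj p"
  shows "inversions (transpose i (Suc i) \<circ> p) \<subseteq> insert (inv p i, inv p (Suc i)) (inversions p)"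
proof
  fix z assume z: "z \<in> inversions (transpose i (Suc i) \<circ> p)"
  then obtain a b where ab: "z = (a, b)" "a < b"
    "transpose i (Suc i) (p b) < transpose i (Suc i) (p a)"
    by (auto simp: inversions_def)
  show "z \<in> insert (inv p i, inv p (Suc i)) (inversions p)"
  proof (cases "p b < p a")
    case False
    then have "p a < p b" using assms ab(2) by (metis injD linorder_neqE_nat less_irrefl)
    then have "p a = i \<and> p b = Suc i"
      using ab(3) by (auto simp: transpose_def split: if_splits)
    then have "a = inv p i" "b = inv p (Suc i)" using assms by (metis inv_f_f)+
    then show ?thesis using ab(1) by simp
  qed (simp add: ab inversions_def)
qed

lemma inv_count_Cons_le: "inv_count (perm_of_word (i # w)) \<le> Suc (inv_count (perm_of_word w))"
proof -
  have "inv_count (perm_of_word (i # w))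
      \<le> card (insert (inv (perm_of_word w) i, inv (perm_of_word w) (Suc i))
                (inversions (perm_of_word w)))"
    unfolding inv_count_def perm_of_word_Cons
    by (intro card_mono finite.insertI finite_inversions_perm_of_word
        inversions_transpose_comp_subset inj_perm_of_word)
  also have "\<dots> \<le> Suc (inv_count (perm_of_word w))"
    by (simp add: inv_count_def card_insert_le_m1 finite_inversions_perm_of_word)
  finally show ?thesis .
qed

lemma inv_count_le_length: "inv_count (perm_of_word w) \<le> length w"
proof (induction w)
  case Nil
  show ?case by (simp only: perm_of_word_Nil inv_count_id list.size(3) order_refl)
next
  case (Cons i w)
  then show ?case using inv_count_Cons_le[of i w] by (simp del: perm_of_word_Cons)
qed

section \<open>Reduced words\<close>

definition reduced :: "nat list \<Rightarrow> bool" where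
  "reduced w \<longleftrightarrow> inv_count (perm_of_word w) = length w"

lemma reduced_Nil [simp]: "reduced []"
  by (simp add: reduced_def)

lemma reduced_cong: "perm_of_word v = perm_of_word w \<Longrightarrow> length v = length w \<Longrightarrow> reduced v = reduced w"
  by (simp add: reduced_def)

lemma reduced_snoc:
  "reduced (w @ [i]) \<longleftrightarrow> reduced w \<and> perm_of_word w i < perm_of_word w (Suc i)"
proof (cases "perm_of_word w i < perm_of_word w (Suc i)")
  case True
  then show ?thesis by (simp add: reduced_def inv_count_snoc_ascent)
next
  case False
  then have "perm_of_word w (Suc i) < perm_of_word w i"
    using perm_of_word_neq_Suc[of w i] by linarith
  then show ?thesis
    using False inv_count_snoc_descent inv_count_le_length[of w] by (fastforce simp: reduced_def)
qed

lemma reduced_appendD1: "reduced (v @ w) \<Longrightarrow> reduced v"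
  by (induction w rule: rev_induct) (auto simp: reduced_snoc simp flip: append_assoc)

lemma reduced_appendD2: "reduced (v @ w) \<Longrightarrow> reduced w"
proof (induction v)
  case (Cons i v)
  have "length (i # v @ w) \<le> Suc (inv_count (perm_of_word (v @ w)))"
    using Cons.prems inv_count_Cons_le[of i "v @ w"] by (simp add: reduced_def)
  then have "reduced (v @ w)"
    using inv_count_le_length[of "v @ w"] by (simp add: reduced_def)
  then show ?case by (rule Cons.IH)
qed simp

lemma not_reduced_double: "\<not> reduced (v @ [i, i] @ w)"
proof
  assume "reduced (v @ [i, i] @ w)"
  then have "reduced ((v @ [i]) @ [i])"
    by (metis append_assoc append_Cons append_Nil reduced_appendD1)
  then show False by (simp only: reduced_snoc) (auto simp: perm_of_word_snoc)
qed

lemma ex_descent: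
  assumes "bij p" "p \<noteq> id"
  shows "\<exists>i. p (Suc i) < (p i :: nat)"
proof (rule ccontr)
  assume "\<nexists>i. p (Suc i) < p i"
  then have "p i < p (Suc i)" for i
    using bij_is_inj[OF assms(1)] by (metis injD n_not_Suc_n linorder_neqE_nat)
  then have mono: "strict_mono p" by (simp add: strict_mono_Suc_iff)
  have inv_mono: "strict_mono (inv p)"
    using assms(1) by (intro strict_mono_inv[OF mono]) (simp_all add: bij_is_surj bij_is_inj)
  have "p n = n" for n
  proof -
    have "p (inv p n) = n" using assms(1) by (simp add: bij_is_surj surj_f_inv_f)
    then have "inv p n \<le> n" using strict_mono_imp_increasing[OF mono, of "inv p n"] by simp
    moreover have "n \<le> inv p n" using strict_mono_imp_increasing[OF inv_mono] .
    ultimately show ?thesis using \<open>p (inv p n) = n\<close> by simp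
  qed
  then show False using assms(2) by auto
qed

lemma descent_permutes_bounds:
  assumes p: "p permutes {a..b}" and "p (Suc i) < p i"
  shows "a \<le> i \<and> i < b"
  using assms permutes_not_in[OF p, of i] permutes_not_in[OF p, of "Suc i"]
    permutes_in_image[OF p, of i] permutes_in_image[OF p, of "Suc i"]
  by (cases "i \<in> {a..b}"; cases "Suc i \<in> {a..b}") auto

lemma ex_reduced_word_permutes:
  "p permutes {a..b} \<Longrightarrow> \<exists>w. set w \<subseteq> {a..<b} \<and> perm_of_word w = p \<and> reduced w"
proof (induction "inv_count p" arbitrary: p rule: less_induct)
  case less
  show ?case
  proof (cases "p = id")
    case False
    then obtain i where i: "p (Suc i) < p i"
      using ex_descent permutes_bij[OF less.prems] by blast
    let ?q = "p \<circ> transpose i (Suc i)"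
    have bounds: "a \<le> i" "i < b" using descent_permutes_bounds[OF less.prems i] by auto
    then have q: "?q permutes {a..b}"
      by (intro permutes_compose[OF _ less.prems] permutes_swap_id) auto
    have "inv_count p = Suc (inv_count ?q)"
      using inv_count_comp_transpose_ascent[of ?q i] i
        finite_subset[OF inversions_permutes_subset[OF q]] by (simp add: comp_assoc)
    then obtain w where w: "set w \<subseteq> {a..<b}" "perm_of_word w = ?q" "reduced w"
      using less.hyps[OF _ q] by auto
    have "perm_of_word (w @ [i]) = p"
      using w(2) by (simp add: perm_of_word_snoc comp_assoc)
    moreover have "reduced (w @ [i])"
      using w i by (simp add: reduced_snoc)
    ultimately show ?thesis using w(1) bounds by (intro exI[of _ "w @ [i]"]) auto
  qed (auto intro: exI[of _ "[]"])
qed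

lemma ex_reduced_word: "\<exists>v. reduced v \<and> perm_of_word v = perm_of_word w"
  using perm_of_word_permutes_bounded ex_reduced_word_permutes by metis

lemma perm_of_word_butlast: "perm_of_word w = perm_of_word (w @ [i]) \<circ> transpose i (Suc i)"
  by (simp add: perm_of_word_snoc comp_assoc)

lemma reduced_snoc_descent:
  "reduced (w @ [i]) \<Longrightarrow> perm_of_word (w @ [i]) (Suc i) < perm_of_word (w @ [i]) i"
  by (simp add: reduced_snoc perm_of_word_snoc)

lemma ex_reduced_word_snoc:
  assumes "perm_of_word w (Suc i) < perm_of_word w i"
  shows "\<exists>v. reduced (v @ [i]) \<and> perm_of_word (v @ [i]) = perm_of_word w"
proof -
  obtain v where v: "reduced v" "perm_of_word v = perm_of_word (w @ [i])"
    using ex_reduced_word by blast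
  then have "perm_of_word (v @ [i]) = perm_of_word w"
    by (simp add: perm_of_word_snoc comp_assoc)
  moreover have "reduced (v @ [i])"
    using v assms by (simp add: reduced_snoc perm_of_word_snoc)
  ultimately show ?thesis by blast
qed

lemma reduced_words_iff:
  "w \<in> reduced_words n p \<longleftrightarrow> set w \<subseteq> {1..n} \<and> perm_of_word w = p \<and> reduced w"
proof
  assume w: "w \<in> reduced_words n p"
  then have "set w \<subseteq> {1..<Suc n}" "perm_of_word w = p"
    by (auto simp: reduced_words_def)
  then obtain w0 where w0: "set w0 \<subseteq> {1..<Suc n}" "perm_of_word w0 = p" "reduced w0"
    using perm_of_word_permutes ex_reduced_word_permutes by metis
  have "length w \<le> length w0"
    using w w0(1,2) unfolding reduced_words_def by (auto simp: atLeastLessThanSuc_atLeastAtMost)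
  then have "length w \<le> inv_count p"
    using w0 by (simp add: reduced_def)
  then show "set w \<subseteq> {1..n} \<and> perm_of_word w = p \<and> reduced w"
    using w inv_count_le_length[of w] by (auto simp: reduced_words_def reduced_def)
next
  assume w: "set w \<subseteq> {1..n} \<and> perm_of_word w = p \<and> reduced w"
  have "length w \<le> length w'" if "perm_of_word w' = p" for w'
    using w inv_count_le_length[of w'] that by (auto simp: reduced_def)
  then show "w \<in> reduced_words n p"
    using w by (simp add: reduced_words_def)
qed

lemma finite_reduced_words: "finite (reduced_words n p)"
proof (rule finite_subset)
  show "reduced_words n p \<subseteq> {w. set w \<subseteq> {1..n} \<and> length w = inv_count p}"
    by (intro subsetI) (auto simp: reduced_words_iff reduced_def)
  show "finite {w. set w \<subseteq> {1..n} \<and> length w = inv_count p}"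
    by (rule finite_lists_length_eq) simp
qed

lemma ex_in_reduced_words: "p permutes {1..Suc n} \<Longrightarrow> \<exists>w. w \<in> reduced_words n p"
  using ex_reduced_word_permutes
  by (fastforce simp: reduced_words_iff atLeastLessThanSuc_atLeastAtMost)

section \<open>Matsumoto's theorem\<close>

inductive braid_move :: "nat list \<Rightarrow> nat list \<Rightarrow> bool" where
  commute: "Suc i < j \<or> Suc j < i \<Longrightarrow> braid_move (u @ [i, j] @ v) (u @ [j, i] @ v)"
| braid: "Suc i = j \<or> Suc j = i \<Longrightarrow> braid_move (u @ [i, j, i] @ v) (u @ [j, i, j] @ v)"

lemma braid_move_snoc: "braid_move u v \<Longrightarrow> braid_move (u @ [k]) (v @ [k])"
  by (induction rule: braid_move.induct) (metis append_assoc braid_move.intros)+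

lemma braid_equiv_snoc: "braid_move\<^sup>*\<^sup>* u v \<Longrightarrow> braid_move\<^sup>*\<^sup>* (u @ [k]) (v @ [k])"
  by (induction rule: rtranclp_induct) (auto intro: rtranclp.rtrancl_into_rtrancl braid_move_snoc)

lemma braid_move_perm_of_word: "braid_move u v \<Longrightarrow> perm_of_word u = perm_of_word v"
  by (induction rule: braid_move.induct) (auto simp: perm_of_word_append fun_eq_iff transpose_def)

lemma braid_move_length: "braid_move u v \<Longrightarrow> length u = length v"
  by (induction rule: braid_move.induct) simp_all

lemma braid_equiv_perm_of_word: "braid_move\<^sup>*\<^sup>* u v \<Longrightarrow> perm_of_word u = perm_of_word v"
  by (induction rule: rtranclp_induct) (simp_all add: braid_move_perm_of_word)

lemma braid_equiv_length: "braid_move\<^sup>*\<^sup>* u v \<Longrightarrow> length u = length v"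
  by (induction rule: rtranclp_induct) (simp_all add: braid_move_length)

lemma ex_braid_move_two_descents:
  assumes "p = perm_of_word u" "i \<noteq> j" "p (Suc i) < p i" "p (Suc j) < p j"
  obtains x y where "reduced x" "perm_of_word (x @ [i]) = p" "braid_move (x @ [i]) (y @ [j])"
proof -
  have "perm_of_word (u @ [i]) (Suc j) < perm_of_word (u @ [i]) j"
    using assms by (auto simp: perm_of_word_snoc transpose_def)
  then obtain w where w: "reduced (w @ [j])" "perm_of_word (w @ [j]) = perm_of_word (u @ [i])"
    using ex_reduced_word_snoc by blast
  consider "Suc i < j \<or> Suc j < i" | "Suc i = j \<or> Suc j = i"
    using assms(2) by linarith
  then show thesis
  proof cases
    case 1
    have "perm_of_word ((w @ [j]) @ [i]) = p"
      by (simp only: perm_of_word_snoc[of "w @ [j]"] w(2))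
        (simp add: assms(1) perm_of_word_snoc comp_assoc)
    moreover have "braid_move ((w @ [j]) @ [i]) ((w @ [i]) @ [j])"
      using braid_move.commute[of j i w "[]"] 1 by auto
    ultimately show thesis using that w(1) by blast
  next
    case 2
    have "perm_of_word w (Suc i) < perm_of_word w i"
      using perm_of_word_butlast[of w j] w(2) assms 2
      by (auto simp: perm_of_word_snoc transpose_def)
    then obtain w' where w': "reduced (w' @ [i])" "perm_of_word (w' @ [i]) = perm_of_word w"
      using ex_reduced_word_snoc by blast
    have "reduced w" using w(1) by (rule reduced_appendD1)
    then have "length (w' @ [i]) = length w"
      using w' by (simp add: reduced_def)
    moreover have perm_w'ij: "perm_of_word ((w' @ [i]) @ [j]) = perm_of_word (w @ [j])"
      by (simp only: perm_of_word_snoc[of "w' @ [i]"] perm_of_word_snoc[of w] w'(2))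
    ultimately have "reduced ((w' @ [i]) @ [j])"
      using reduced_cong w(1) by (metis length_append_singleton)
    moreover have "perm_of_word (((w' @ [i]) @ [j]) @ [i]) = p"
      by (simp only: perm_of_word_snoc[of "(w' @ [i]) @ [j]"] perm_w'ij w(2))
        (simp add: assms(1) perm_of_word_snoc comp_assoc)
    moreover have "braid_move (((w' @ [i]) @ [j]) @ [i]) ((w' @ [j, i]) @ [j])"
      using braid_move.braid[of i j w' "[]"] 2 by auto
    ultimately show thesis using that by blast
  qed
qed

text \<open>
  If the last letters i and j of u and v differ, both are descents of perm_of_word u, so
  ex_braid_move_two_descents provides a braid move from a word ending in i to a word ending
  in j; by induction these are connected to u and to v.
\<close>

theorem matsumoto:
  assumes "reduced u" "reduced v" "perm_of_word u = perm_of_word v"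
  shows "braid_move\<^sup>*\<^sup>* u v"
proof -
  obtain k where "length u = k" by blast
  with assms show ?thesis
  proof (induction k arbitrary: u v)
    case 0
    then show ?case by (simp add: reduced_def)
  next
    case (Suc k)
    have IH: "braid_move\<^sup>*\<^sup>* x y"
      if "reduced x" "reduced y" "perm_of_word x = perm_of_word y" "length x = k" for x y
      using Suc.IH that by blast
    have "length v = Suc k" using Suc.prems by (simp add: reduced_def)
    then obtain u0 i v0 j where uv: "u = u0 @ [i]" "v = v0 @ [j]"
      using Suc.prems(4) by (metis length_Suc_conv_rev)
    then have k: "length u0 = k" "length v0 = k"
      using Suc.prems(4) \<open>length v = Suc k\<close> by auto
    define \<tau> where "\<tau> = perm_of_word u"
    have red: "reduced u0" "reduced v0"
      using Suc.prems(1,2) uv reduced_appendD1 by blast+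
    have perm0: "perm_of_word u0 = \<tau> \<circ> transpose i (Suc i)"
      "perm_of_word v0 = \<tau> \<circ> transpose j (Suc j)"
      using perm_of_word_butlast \<tau>_def Suc.prems(3) uv by metis+
    show ?case
    proof (cases "i = j")
      case True
      then have "braid_move\<^sup>*\<^sup>* u0 v0" using IH[OF red] perm0 k by simp
      then show ?thesis using braid_equiv_snoc uv True by blast
    next
      case False
      have "\<tau> (Suc i) < \<tau> i" "\<tau> (Suc j) < \<tau> j"
        using reduced_snoc_descent Suc.prems uv \<tau>_def by metis+
      then obtain x y where xy: "reduced x" "perm_of_word (x @ [i]) = \<tau>"
        "braid_move (x @ [i]) (y @ [j])"
        using ex_braid_move_two_descents[OF \<tau>_def False] by blast
      have x: "perm_of_word x = perm_of_word u0" "length x = k"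
        using perm_of_word_butlast[of x i] xy(1,2) red(1) k(1) perm0(1)
        by (simp_all add: reduced_def)
      have "perm_of_word (y @ [j]) = \<tau>" "length (y @ [j]) = Suc k"
        using braid_move_perm_of_word[OF xy(3)] braid_move_length[OF xy(3)] xy(2) x(2) by simp_all
      then have "reduced (y @ [j])"
        using reduced_cong[of "y @ [j]" u] Suc.prems(1,4) \<tau>_def by simp
      moreover have "perm_of_word y = perm_of_word v0"
        using perm_of_word_butlast[of y j] \<open>perm_of_word (y @ [j]) = \<tau>\<close> perm0(2) by simp
      moreover have "length y = k" using \<open>length (y @ [j]) = Suc k\<close> by simp
      ultimately have "braid_move\<^sup>*\<^sup>* y v0"
        using IH[OF reduced_appendD1 red(2)] by blast
      moreover have "braid_move\<^sup>*\<^sup>* u0 x"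
        using IH[OF red(1) xy(1)] x k(1) by simp
      ultimately have "braid_move\<^sup>*\<^sup>* u (x @ [i])" "braid_move\<^sup>*\<^sup>* (y @ [j]) v"
        using braid_equiv_snoc uv(1,2) by blast+
      with xy(3) show ?thesis
        by (meson rtranclp.rtrancl_into_rtrancl rtranclp_trans)
    qed
  qed
qed

section \<open>Splitting a word into low and high letters\<close>

text \<open>
  The hypothesis on the complementary projection excludes braid moves mixing the two
  alphabets, which would create a factor a a in one of the projections.
\<close>

lemma braid_move_project:
  assumes "braid_move u v"
    and "reduced (map h (filter P u))" "reduced (map g (filter Q u))"
    and Q: "\<And>a. Q a \<longleftrightarrow> \<not> P a"
    and h: "\<And>a b. P a \<Longrightarrow> P b \<Longrightarrow> h a + b = h b + a"
  shows "braid_move\<^sup>*\<^sup>* (map h (filter P u)) (map h (filter P v))"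
  using assms(1-3)
proof (induction rule: braid_move.induct)
  case (commute i j x y)
  show ?case
  proof (cases "P i \<and> P j")
    case True
    then have "Suc (h i) < h j \<or> Suc (h j) < h i"
      using commute.hyps h[of i j] by linarith
    then show ?thesis
      using True braid_move.commute[of "h i" "h j" "map h (filter P x)" "map h (filter P y)"]
      by auto
  qed auto
next
  case (braid i j x y)
  consider "P i" "P j" | "\<not> P i" "\<not> P j" | "P i \<noteq> P j" by blast
  then show ?case
  proof cases
    case 1
    then have "Suc (h i) = h j \<or> Suc (h j) = h i"
      using braid.hyps h[of i j] by linarith
    then show ?thesis
      using 1 braid_move.braid[of "h i" "h j" "map h (filter P x)" "map h (filter P y)"]
      by auto
  next
    case 3
    then show ?thesis using braid.prems Q not_reduced_double by (cases "P i") auto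
  qed auto
qed

definition low_letters :: "nat \<Rightarrow> nat list \<Rightarrow> nat list" where
  "low_letters m u = filter (\<lambda>x. x \<le> m) u"

text \<open>The letters above m, lowered by m: this undoes the shift of the second factor in nabla_basis.\<close>

definition high_letters :: "nat \<Rightarrow> nat list \<Rightarrow> nat list" where
  "high_letters m u = map (\<lambda>x. x - m) (filter (\<lambda>x. m < x) u)"

definition split_reduced :: "nat \<Rightarrow> nat list \<Rightarrow> bool" where
  "split_reduced m u \<longleftrightarrow> reduced (low_letters m u) \<and> reduced (high_letters m u)"

lemma braid_move_split:
  assumes "braid_move u v" "split_reduced m u"
  shows "braid_move\<^sup>*\<^sup>* (low_letters m u) (low_letters m v)"
    and "braid_move\<^sup>*\<^sup>* (high_letters m u) (high_letters m v)"
proof -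
  have "braid_move\<^sup>*\<^sup>* (map id (filter (\<lambda>x. x \<le> m) u)) (map id (filter (\<lambda>x. x \<le> m) v))"
    by (rule braid_move_project[where g = "\<lambda>x. x - m" and Q = "\<lambda>x. m < x"])
      (use assms in \<open>auto simp: split_reduced_def low_letters_def high_letters_def\<close>)
  then show "braid_move\<^sup>*\<^sup>* (low_letters m u) (low_letters m v)"
    by (simp add: low_letters_def)
  show "braid_move\<^sup>*\<^sup>* (high_letters m u) (high_letters m v)"
    unfolding high_letters_def
    by (rule braid_move_project[where g = id and Q = "\<lambda>x. x \<le> m"])
      (use assms in \<open>auto simp: split_reduced_def low_letters_def high_letters_def\<close>)
qed

lemma braid_equiv_split:
  assumes "braid_move\<^sup>*\<^sup>* u v" "split_reduced m u"
  shows "split_reduced m v \<and>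
    perm_of_word (low_letters m v) = perm_of_word (low_letters m u) \<and>
    perm_of_word (high_letters m v) = perm_of_word (high_letters m u)"
  using assms
proof (induction rule: rtranclp_induct)
  case (step y z)
  then have y: "split_reduced m y" by blast
  have "braid_move\<^sup>*\<^sup>* (low_letters m y) (low_letters m z)"
    "braid_move\<^sup>*\<^sup>* (high_letters m y) (high_letters m z)"
    using braid_move_split[OF step.hyps(2) y] by blast+
  then show ?case
    using step y braid_equiv_perm_of_word braid_equiv_length reduced_cong
    unfolding split_reduced_def by metis
qed simp

lemma split_reduced_snocD: "split_reduced m (u @ [i]) \<Longrightarrow> split_reduced m u"
  by (cases "i \<le> m")
    (auto simp: split_reduced_def low_letters_def high_letters_def dest: reduced_appendD1)

lemma not_split_reduced_double: "\<not> split_reduced m (u @ [i, i])"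
  using not_reduced_double[of _ _ "[]"]
  by (cases "i \<le> m") (auto simp: split_reduced_def low_letters_def high_letters_def)

text \<open>
  If u @ [i] were not reduced, Matsumoto's theorem would move u to a word ending in i, and
  one projection of the resulting word ending in [i, i] would not be reduced.
\<close>

lemma split_reduced_imp_reduced: "split_reduced m u \<Longrightarrow> reduced u"
proof (induction u rule: rev_induct)
  case (snoc i u)
  then have u: "reduced u" using split_reduced_snocD by blast
  show ?case
  proof (rule ccontr)
    assume "\<not> reduced (u @ [i])"
    then have "perm_of_word u (Suc i) < perm_of_word u i"
      using u reduced_snoc perm_of_word_neq_Suc by (metis linorder_neqE_nat)
    then obtain w where w: "reduced (w @ [i])" "perm_of_word (w @ [i]) = perm_of_word u"
      using ex_reduced_word_snoc by blast
    have "braid_move\<^sup>*\<^sup>* (u @ [i]) ((w @ [i]) @ [i])"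
      using matsumoto[OF u w(1) w(2)[symmetric]] braid_equiv_snoc by blast
    then have "split_reduced m (w @ [i, i])"
      using braid_equiv_split snoc.prems by fastforce
    then show False using not_split_reduced_double by blast
  qed
qed simp

lemma split_reduced_reduced_word:
  assumes "split_reduced m u" "reduced v" "perm_of_word v = perm_of_word u"
  shows "split_reduced m v \<and>
    perm_of_word (low_letters m v) = perm_of_word (low_letters m u) \<and>
    perm_of_word (high_letters m v) = perm_of_word (high_letters m u)"
  using matsumoto[OF split_reduced_imp_reduced[OF assms(1)] assms(2) assms(3)[symmetric]]
    assms(1) by (rule braid_equiv_split)

section \<open>Finite linear combinations\<close>

lemma lin_span_zero: "(\<lambda>t. 0) \<in> lin_span G"
  unfolding lin_span_def by (auto intro!: exI[of _ "{}"])

lemma lin_span_superset: "g \<in> G \<Longrightarrow> g \<in> lin_span G"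
  unfolding lin_span_def by (auto intro!: exI[of _ "{g}"] exI[of _ "\<lambda>_. 1"])

lemma lin_span_mono: "G \<subseteq> H \<Longrightarrow> lin_span G \<subseteq> lin_span H"
  unfolding lin_span_def by blast

lemma lin_span_scale: "x \<in> lin_span G \<Longrightarrow> (\<lambda>t. c * x t) \<in> lin_span G"
  unfolding lin_span_def
  by (fastforce simp: sum_distrib_left mult.assoc intro!: exI[of _ "\<lambda>g. c * _ g"])

lemma lin_span_add:
  assumes "x \<in> lin_span G" "y \<in> lin_span G"
  shows "(\<lambda>t. x t + y t) \<in> lin_span G"
proof -
  obtain A a B b where A: "finite A" "A \<subseteq> G" "x = (\<lambda>t. \<Sum>g\<in>A. a g * g t)"
    and B: "finite B" "B \<subseteq> G" "y = (\<lambda>t. \<Sum>g\<in>B. b g * g t)"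
    using assms unfolding lin_span_def by blast
  define c where "c g = (if g \<in> A then a g else 0) + (if g \<in> B then b g else 0)" for g
  have "(\<Sum>g\<in>A \<union> B. c g * g t) = x t + y t" for t
  proof -
    have "(\<Sum>g\<in>A \<union> B. c g * g t) =
        (\<Sum>g\<in>A \<union> B. if g \<in> A then a g * g t else 0) + (\<Sum>g\<in>A \<union> B. if g \<in> B then b g * g t else 0)"
      by (subst sum.distrib[symmetric]) (auto intro!: sum.cong simp: c_def distrib_right)
    also have "\<dots> = x t + y t"
      using A B by (simp add: sum.inter_restrict[symmetric] Int_absorb1)
    finally show ?thesis .
  qed
  then show ?thesis
    using A B unfolding lin_span_def by (intro CollectI exI[of _ "A \<union> B"] exI[of _ c]) auto
qed

lemma lin_span_sum:
  "finite I \<Longrightarrow> (\<And>i. i \<in> I \<Longrightarrow> f i \<in> lin_span G) \<Longrightarrow>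
    (\<lambda>t. \<Sum>i\<in>I. c i * f i t) \<in> lin_span G"
proof (induction I rule: finite_induct)
  case (insert i I)
  then show ?case
    using lin_span_add[OF lin_span_scale[of "f i" G "c i"]] by simp
qed (simp add: lin_span_zero)

lemma lin_span_map:
  assumes "x \<in> lin_span G"
    and linear: "\<And>A c. finite A \<Longrightarrow> A \<subseteq> G \<Longrightarrow>
      f (\<lambda>t. \<Sum>g\<in>A. c g * g t) = (\<lambda>t. \<Sum>g\<in>A. c g * f g t)"
    and gens: "\<And>g. g \<in> G \<Longrightarrow> f g \<in> lin_span H"
  shows "f x \<in> lin_span H"
proof -
  obtain A c where "finite A" "A \<subseteq> G" "x = (\<lambda>t. \<Sum>g\<in>A. c g * g t)"
    using assms(1) unfolding lin_span_def by blast
  then show ?thesis using linear gens lin_span_sum[of A f H c] by auto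
qed

definition linear_ext :: "('b \<Rightarrow> 'c \<Rightarrow> 'k::field) \<Rightarrow> ('b \<Rightarrow> 'k) \<Rightarrow> 'c \<Rightarrow> 'k" where
  "linear_ext K x = (\<lambda>t. \<Sum>b\<in>supp x. x b * K b t)"

lemma linear_ext_eq: "finite S \<Longrightarrow> supp x \<subseteq> S \<Longrightarrow> linear_ext K x t = (\<Sum>b\<in>S. x b * K b t)"
  unfolding linear_ext_def by (rule sum.mono_neutral_left) (auto simp: supp_def)

lemma supp_lin_comb: "supp (\<lambda>t. \<Sum>g\<in>A. (c g :: 'k::field) * g t) \<subseteq> (\<Union>g\<in>A. supp g)"
  by (auto simp: supp_def intro: ccontr dest: sum.not_neutral_contains_not_neutral)

lemma linear_ext_lin_comb:
  assumes "finite A" "\<And>g. g \<in> A \<Longrightarrow> finite (supp g)"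
  shows "linear_ext K (\<lambda>t. \<Sum>g\<in>A. c g * g t) = (\<lambda>t. \<Sum>g\<in>A. c g * linear_ext K g t)"
proof
  fix t
  define S where "S = (\<Union>g\<in>A. supp g)"
  have S: "finite S" "\<And>g. g \<in> A \<Longrightarrow> supp g \<subseteq> S"
    using assms by (auto simp: S_def)
  have "supp (\<lambda>t. \<Sum>g\<in>A. c g * g t) \<subseteq> S"
    unfolding S_def by (rule supp_lin_comb)
  then have "linear_ext K (\<lambda>t. \<Sum>g\<in>A. c g * g t) t = (\<Sum>b\<in>S. (\<Sum>g\<in>A. c g * g b) * K b t)"
    by (rule linear_ext_eq[OF S(1)])
  also have "\<dots> = (\<Sum>g\<in>A. c g * (\<Sum>b\<in>S. g b * K b t))"
    by (simp add: sum_distrib_right sum_distrib_left sum.swap[of _ S] mult.assoc)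
  also have "\<dots> = (\<Sum>g\<in>A. c g * linear_ext K g t)"
    by (intro sum.cong refl) (simp add: linear_ext_eq[OF S(1) S(2)])
  finally show "linear_ext K (\<lambda>t. \<Sum>g\<in>A. c g * g t) t = (\<Sum>g\<in>A. c g * linear_ext K g t)" .
qed

lemma linear_ext_in_lin_span:
  assumes "x \<in> lin_span G" "\<And>g. g \<in> G \<Longrightarrow> finite (supp g)"
    and "\<And>g. g \<in> G \<Longrightarrow> linear_ext K g \<in> lin_span H"
  shows "linear_ext K x \<in> lin_span H"
proof (rule lin_span_map[OF assms(1) _ assms(3)])
  show "linear_ext K (\<lambda>t. \<Sum>g\<in>A. c g * g t) = (\<lambda>t. \<Sum>g\<in>A. c g * linear_ext K g t)"
    if "finite A" "A \<subseteq> G" for A c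
    using that assms(2) by (intro linear_ext_lin_comb) auto
qed

lemma Delta_eq_linear_ext: "Delta x = linear_ext delta_basis x"
  by (simp add: Delta_def linear_ext_def)

lemma nabla_in_lin_span:
  assumes "x \<in> lin_span G" "y \<in> lin_span G" "\<And>g. g \<in> G \<Longrightarrow> finite (supp g)"
    and "\<And>g h. g \<in> G \<Longrightarrow> h \<in> G \<Longrightarrow> nabla g h \<in> lin_span H"
  shows "nabla x y \<in> lin_span H"
proof -
  have left: "nabla x y = linear_ext (\<lambda>b t. linear_ext (nabla_basis b) y t) x" for x y
    by (simp add: nabla_def linear_ext_def sum_distrib_left mult.assoc)
  have right: "nabla x y = linear_ext (\<lambda>b t. \<Sum>b1\<in>supp x. x b1 * nabla_basis b1 b t) y"
    for x y :: "'a vec"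
    unfolding nabla_def linear_ext_def
    by (rule ext) (simp add: sum_distrib_left sum.swap[of _ "supp x"] mult.assoc mult.left_commute)
  have "nabla g y \<in> lin_span H" if "g \<in> G" for g
    unfolding right[of g] using assms that
    by (intro linear_ext_in_lin_span[of y G]) (simp_all add: right[symmetric])
  then show ?thesis
    unfolding left using assms
    by (intro linear_ext_in_lin_span[of x G]) (simp_all add: left[symmetric])
qed

lemma homog_in_lin_span:
  assumes "x \<in> lin_span G" "\<And>g. g \<in> G \<Longrightarrow> homog d g \<in> lin_span H"
  shows "homog d x \<in> lin_span H"
proof (rule lin_span_map[OF assms(1) _ assms(2)])
  show "homog d (\<lambda>t. \<Sum>g\<in>A. c g * g t) = (\<lambda>t. \<Sum>g\<in>A. c g * homog d g t)" for A c
    by (rule ext) (auto simp: homog_def)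
qed

section \<open>The product\<close>

lemma perm_vec_apply:
  "(perm_vec n p :: 'k::field vec) (w, k) = (if k = n \<and> w \<in> reduced_words n p then 1 else 0)"
  unfolding perm_vec_def bvec_def
  by (auto simp: sum.delta'[OF finite_reduced_words] intro: sum.neutral)

lemma supp_perm_vec: "supp (perm_vec n p :: 'k::field vec) = (\<lambda>w. (w, n)) ` reduced_words n p"
  by (auto simp: supp_def perm_vec_apply split: if_splits)

lemma finite_supp_perm_vec: "finite (supp (perm_vec n p :: 'k::field vec))"
  by (simp add: supp_perm_vec finite_reduced_words)

lemma sum_supp_perm_vec:
  "(\<Sum>b\<in>supp (perm_vec n p :: 'k::field vec). f b) = (\<Sum>w\<in>reduced_words n p. f (w, n))"
  unfolding supp_perm_vec by (subst sum.reindex) (auto simp: inj_on_def)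

definition PiFC_gens :: "'k::field vec set" where
  "PiFC_gens = {perm_vec n p | n p. p permutes {1..Suc n} \<and> fully_commutative n p}"

lemma PiFC_eq_lin_span: "PiFC = lin_span PiFC_gens"
  by (simp add: PiFC_def PiFC_gens_def)

lemma PiFC_gensE:
  assumes "g \<in> PiFC_gens"
  obtains n p where "g = perm_vec n p" "p permutes {1..Suc n}" "fully_commutative n p"
  using assms by (auto simp: PiFC_gens_def)

lemma perm_vec_in_PiFC:
  "p permutes {1..Suc n} \<Longrightarrow> fully_commutative n p \<Longrightarrow> (perm_vec n p :: 'k::field vec) \<in> PiFC"
  unfolding PiFC_eq_lin_span PiFC_gens_def by (intro lin_span_superset) blast

lemma count_image_mset_Cons:
  "count (image_mset (Cons x) M) u = (case u of [] \<Rightarrow> 0 | y # u' \<Rightarrow> if y = x then count M u' else 0)"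
  by (induction M) (auto split: list.split)

lemma filter_complement_eq_iff:
  "\<forall>x\<in>set w. \<not> P x \<Longrightarrow> filter P u = [] \<and> filter (\<lambda>x. \<not> P x) u = w \<longleftrightarrow> u = w"
  by (auto simp: filter_empty_conv)

lemma count_shuffle:
  assumes "\<forall>x\<in>set v. P x" "\<forall>x\<in>set w. \<not> P x"
  shows "count (shuffle v w) u = (if filter P u = v \<and> filter (\<lambda>x. \<not> P x) u = w then 1 else 0)"
  using assms
proof (induction v w arbitrary: u rule: shuffle.induct)
  case (1 w)
  then show ?case using filter_complement_eq_iff[of w P u] by auto
next
  case (2 a v)
  then show ?case using filter_complement_eq_iff[of "a # v" "\<lambda>x. \<not> P x" u] by auto
next
  case (3 a v b w)
  then show ?case by (cases u) (auto simp: count_image_mset_Cons)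
qed

definition shuffle_words :: "nat \<Rightarrow> nat \<Rightarrow> (nat \<Rightarrow> nat) \<Rightarrow> (nat \<Rightarrow> nat) \<Rightarrow> nat list set" where
  "shuffle_words m n \<pi> \<sigma> =
    {u. low_letters m u \<in> reduced_words m \<pi> \<and> high_letters m u \<in> reduced_words n \<sigma>}"

lemma count_shuffle_shift:
  assumes "\<forall>x\<in>set a. x \<le> m" "\<forall>x\<in>set b. 0 < x"
  shows "count (shuffle a (shift b m)) u =
    (if low_letters m u = a \<and> high_letters m u = b then 1 else 0)"
proof -
  have "filter (\<lambda>x. m < x) u = shift b m \<longleftrightarrow> high_letters m u = b"
  proof
    assume "high_letters m u = b"
    then have "shift b m = map (\<lambda>x. x - m + m) (filter (\<lambda>x. m < x) u)"
      by (auto simp: high_letters_def shift_def)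
    also have "\<dots> = filter (\<lambda>x. m < x) u" by (rule map_idI) auto
    finally show "filter (\<lambda>x. m < x) u = shift b m" by simp
  qed (auto simp: high_letters_def shift_def comp_def)
  then show ?thesis
    using count_shuffle[of a "\<lambda>x. x \<le> m" "shift b m" u] assms
    by (simp add: low_letters_def shift_def not_le)
qed

lemma nabla_perm_vec_apply:
  "nabla (perm_vec m \<pi> :: 'k::field vec) (perm_vec n \<sigma>) (u, k) =
    (if k = m + n \<and> u \<in> shuffle_words m n \<pi> \<sigma> then 1 else 0)"
proof -
  have "(nabla_basis (a, m) (b, n) (u, k) :: 'k) =
      (if a = low_letters m u then
        if b = high_letters m u then if k = m + n then 1 else 0 else 0 else 0)"
    if "a \<in> reduced_words m \<pi>" "b \<in> reduced_words n \<sigma>" for a b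
  proof -
    have "\<forall>x\<in>set a. x \<le> m" "\<forall>x\<in>set b. 0 < x"
      using that by (auto simp: reduced_words_iff)
    from count_shuffle_shift[OF this, of u] show ?thesis by (auto simp: nabla_basis_def)
  qed
  then have "nabla (perm_vec m \<pi> :: 'k vec) (perm_vec n \<sigma>) (u, k) =
      (\<Sum>a\<in>reduced_words m \<pi>. \<Sum>b\<in>reduced_words n \<sigma>.
        if a = low_letters m u then
          if b = high_letters m u then if k = m + n then 1 else 0 else 0 else 0)"
    unfolding nabla_def by (simp add: sum_supp_perm_vec perm_vec_apply)
  also have "\<dots> = (\<Sum>a\<in>reduced_words m \<pi>. if a = low_letters m u then
      if high_letters m u \<in> reduced_words n \<sigma> \<and> k = m + n then 1 else 0 else 0)"
    by (intro sum.cong refl) (auto simp: sum.delta[OF finite_reduced_words])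
  finally show ?thesis
    by (simp add: sum.delta[OF finite_reduced_words] shuffle_words_def)
qed

lemma shuffle_words_letters: "u \<in> shuffle_words m n \<pi> \<sigma> \<Longrightarrow> set u \<subseteq> {1..m + n}"
  by (force simp: shuffle_words_def reduced_words_iff low_letters_def high_letters_def)

lemma reduced_words_shuffle_words:
  assumes "u0 \<in> shuffle_words m n \<pi> \<sigma>"
  shows "u \<in> reduced_words (m + n) (perm_of_word u0) \<longleftrightarrow>
    u \<in> shuffle_words m n \<pi> \<sigma> \<and> perm_of_word u = perm_of_word u0"
proof
  assume u: "u \<in> reduced_words (m + n) (perm_of_word u0)"
  have "split_reduced m u0"
    using assms by (simp add: shuffle_words_def split_reduced_def reduced_words_iff)
  then have "split_reduced m u"
    "perm_of_word (low_letters m u) = perm_of_word (low_letters m u0)"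
    "perm_of_word (high_letters m u) = perm_of_word (high_letters m u0)"
    using split_reduced_reduced_word u by (auto simp: reduced_words_iff)
  moreover have "set (low_letters m u) \<subseteq> {1..m}" "set (high_letters m u) \<subseteq> {1..n}"
    using u by (force simp: reduced_words_iff low_letters_def high_letters_def)+
  ultimately show "u \<in> shuffle_words m n \<pi> \<sigma> \<and> perm_of_word u = perm_of_word u0"
    using assms u by (simp add: shuffle_words_def split_reduced_def reduced_words_iff)
next
  assume "u \<in> shuffle_words m n \<pi> \<sigma> \<and> perm_of_word u = perm_of_word u0"
  moreover from this have "reduced u"
    by (intro split_reduced_imp_reduced[of m])
      (simp add: shuffle_words_def split_reduced_def reduced_words_iff)
  ultimately show "u \<in> reduced_words (m + n) (perm_of_word u0)"
    using shuffle_words_letters[of u m n \<pi> \<sigma>] by (simp add: reduced_words_iff)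
qed

lemma fully_commutative_shuffle_words:
  assumes "fully_commutative m \<pi>" "fully_commutative n \<sigma>" "u0 \<in> shuffle_words m n \<pi> \<sigma>"
  shows "fully_commutative (m + n) (perm_of_word u0)"
  unfolding fully_commutative_def
proof (intro ballI notI)
  fix w assume "w \<in> reduced_words (m + n) (perm_of_word u0)"
  then have w: "low_letters m w \<in> reduced_words m \<pi>" "high_letters m w \<in> reduced_words n \<sigma>"
    using reduced_words_shuffle_words[OF assms(3)] by (auto simp: shuffle_words_def)
  assume "\<exists>x y i. w = x @ [i, Suc i, i] @ y"
  then obtain x y i where xy: "w = x @ [i, Suc i, i] @ y" by blast
  consider "Suc i \<le> m" | "i = m" | "m < i" by linarith
  then show False
  proof cases
    case 1
    then have "low_letters m w = low_letters m x @ [i, Suc i, i] @ low_letters m y"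
      by (simp add: xy low_letters_def)
    then show False using w(1) assms(1) by (auto simp: fully_commutative_def)
  next
    case 2
    then have "low_letters m w = low_letters m x @ [i, i] @ low_letters m y"
      by (simp add: xy low_letters_def)
    then show False using w(1) not_reduced_double by (auto simp: reduced_words_iff)
  next
    case 3
    then have "high_letters m w = high_letters m x @ [i - m, Suc (i - m), i - m] @ high_letters m y"
      by (simp add: xy high_letters_def Suc_diff_le)
    then show False using w(2) assms(2) by (auto simp: fully_commutative_def)
  qed
qed

lemma permutes_shuffle_words:
  assumes "u \<in> shuffle_words m n \<pi> \<sigma>"
  shows "perm_of_word u permutes {1..Suc (m + n)}"
proof -
  have "set u \<subseteq> {1..<Suc (m + n)}" using shuffle_words_letters[OF assms] by auto
  then show ?thesis by (rule perm_of_word_permutes)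
qed

lemma finite_perm_of_word_shuffle_words: "finite (perm_of_word ` shuffle_words m n \<pi> \<sigma>)"
proof (rule finite_subset)
  show "perm_of_word ` shuffle_words m n \<pi> \<sigma> \<subseteq> {\<tau>. \<tau> permutes {1..Suc (m + n)}}"
    using permutes_shuffle_words by blast
qed (simp add: finite_permutations)

lemma nabla_perm_vec:
  "nabla (perm_vec m \<pi> :: 'k::field vec) (perm_vec n \<sigma>) =
    (\<lambda>t. \<Sum>\<tau>\<in>perm_of_word ` shuffle_words m n \<pi> \<sigma>. 1 * perm_vec (m + n) \<tau> t)"
proof
  fix t :: label
  obtain u k where t: "t = (u, k)" by fastforce
  let ?T = "perm_of_word ` shuffle_words m n \<pi> \<sigma>"
  have "(\<Sum>\<tau>\<in>?T. 1 * (perm_vec (m + n) \<tau> :: 'k vec) (u, k)) =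
      (\<Sum>\<tau>\<in>?T. if \<tau> = perm_of_word u then
        if k = m + n \<and> u \<in> reduced_words (m + n) (perm_of_word u) then 1 else 0 else 0)"
    by (intro sum.cong refl) (auto simp: perm_vec_apply reduced_words_iff)
  also have "\<dots> = (if k = m + n \<and> u \<in> shuffle_words m n \<pi> \<sigma> then 1 else 0)"
    using reduced_words_shuffle_words[of _ m n \<pi> \<sigma> u]
    by (auto simp: sum.delta[OF finite_perm_of_word_shuffle_words] reduced_words_iff)
  finally show "nabla (perm_vec m \<pi> :: 'k vec) (perm_vec n \<sigma>) t = (\<Sum>\<tau>\<in>?T. 1 * perm_vec (m + n) \<tau> t)"
    by (simp add: t nabla_perm_vec_apply)
qed

lemma nabla_perm_vec_in_PiFC:
  assumes "fully_commutative m \<pi>" "fully_commutative n \<sigma>"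
  shows "nabla (perm_vec m \<pi> :: 'k::field vec) (perm_vec n \<sigma>) \<in> PiFC"
  unfolding nabla_perm_vec PiFC_eq_lin_span
proof (rule lin_span_sum[OF finite_perm_of_word_shuffle_words])
  fix \<tau> assume "\<tau> \<in> perm_of_word ` shuffle_words m n \<pi> \<sigma>"
  then show "perm_vec (m + n) \<tau> \<in> lin_span PiFC_gens"
    using permutes_shuffle_words fully_commutative_shuffle_words[OF assms]
      perm_vec_in_PiFC[unfolded PiFC_eq_lin_span] by blast
qed

section \<open>The coproduct\<close>

lemma Delta_perm_vec_apply:
  "Delta (perm_vec n \<pi> :: 'k::field vec) ((a, i), (c, j)) =
    (if i = n \<and> j = n \<and> a @ c \<in> reduced_words n \<pi> then 1 else 0)"
proof -
  have "l \<le> length w \<and> take l w = a \<and> drop l w = c \<longleftrightarrow> w = a @ c \<and> l = length a" for l w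
  proof
    assume "l \<le> length w \<and> take l w = a \<and> drop l w = c"
    then show "w = a @ c \<and> l = length a" by (metis append_take_drop_id length_take min.absorb2)
  qed auto
  then have "{l. l \<le> length w \<and> (a, i) = (take l w, n) \<and> (c, j) = (drop l w, n)} =
      {l. (w = a @ c \<and> i = n \<and> j = n) \<and> l = length a}" for w
    by (intro Collect_cong) auto
  moreover have "card {l. Q \<and> l = length a} = (if Q then 1 else 0)" for Q
    by (cases Q) auto
  ultimately have "(delta_basis (w, n) ((a, i), (c, j)) :: 'k) =
      (if w = a @ c then if i = n \<and> j = n then 1 else 0 else 0)" for w
    by (simp add: delta_basis_def)
  then show ?thesis
    by (simp add: Delta_def sum_supp_perm_vec perm_vec_apply sum.delta[OF finite_reduced_words])
qed

definition reduced_factorizations :: "nat \<Rightarrow> (nat \<Rightarrow> nat) \<Rightarrow> ((nat \<Rightarrow> nat) \<times> (nat \<Rightarrow> nat)) set" where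
  "reduced_factorizations n \<pi> = {(\<sigma>, \<rho>). \<sigma> permutes {1..Suc n} \<and> \<rho> permutes {1..Suc n} \<and>
      \<sigma> \<circ> \<rho> = \<pi> \<and> inv_count \<sigma> + inv_count \<rho> = inv_count \<pi>}"

lemma finite_reduced_factorizations: "finite (reduced_factorizations n \<pi>)"
  by (rule finite_subset[of _ "{\<sigma>. \<sigma> permutes {1..Suc n}} \<times> {\<rho>. \<rho> permutes {1..Suc n}}"])
    (auto simp: reduced_factorizations_def finite_permutations)

lemma append_in_reduced_words_iff:
  "a @ c \<in> reduced_words n \<pi> \<longleftrightarrow>
    (perm_of_word a, perm_of_word c) \<in> reduced_factorizations n \<pi> \<and>
    a \<in> reduced_words n (perm_of_word a) \<and> c \<in> reduced_words n (perm_of_word c)"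
proof -
  have "perm_of_word a permutes {1..Suc n}" "perm_of_word c permutes {1..Suc n}"
    if "set a \<subseteq> {1..n}" "set c \<subseteq> {1..n}"
    using that perm_of_word_permutes by (fastforce simp: atLeastLessThanSuc_atLeastAtMost)+
  then show ?thesis
    using reduced_appendD1[of a c] reduced_appendD2[of a c]
    by (auto simp: reduced_words_iff reduced_factorizations_def reduced_def perm_of_word_append)
qed

lemma Delta_perm_vec:
  "Delta (perm_vec n \<pi> :: 'k::field vec) =
    (\<lambda>t. \<Sum>q\<in>reduced_factorizations n \<pi>. 1 * tensor (perm_vec n (fst q)) (perm_vec n (snd q)) t)"
proof
  fix t :: "label \<times> label"
  obtain a i c j where t: "t = ((a, i), (c, j))" by (metis prod.exhaust)
  have "(\<Sum>q\<in>reduced_factorizations n \<pi>.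
        1 * tensor (perm_vec n (fst q) :: 'k vec) (perm_vec n (snd q)) ((a, i), (c, j))) =
      (\<Sum>q\<in>reduced_factorizations n \<pi>. if q = (perm_of_word a, perm_of_word c) then
        if i = n \<and> j = n \<and> a \<in> reduced_words n (perm_of_word a) \<and>
          c \<in> reduced_words n (perm_of_word c) then 1 else 0 else 0)"
    by (intro sum.cong refl) (auto simp: tensor_def perm_vec_apply reduced_words_iff)
  also have "\<dots> = Delta (perm_vec n \<pi> :: 'k vec) ((a, i), (c, j))"
    using append_in_reduced_words_iff[of a c n \<pi>]
    by (auto simp: sum.delta[OF finite_reduced_factorizations] Delta_perm_vec_apply)
  finally show "Delta (perm_vec n \<pi> :: 'k vec) t =
      (\<Sum>q\<in>reduced_factorizations n \<pi>. 1 * tensor (perm_vec n (fst q)) (perm_vec n (snd q)) t)"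
    by (simp add: t)
qed

lemma fully_commutative_reduced_factorization:
  assumes fc: "fully_commutative n \<pi>" and q: "(\<sigma>, \<rho>) \<in> reduced_factorizations n \<pi>"
  shows "fully_commutative n \<sigma> \<and> fully_commutative n \<rho>"
proof -
  have append: "x @ y \<in> reduced_words n \<pi>"
    if "x \<in> reduced_words n \<sigma>" "y \<in> reduced_words n \<rho>" for x y
    using that q append_in_reduced_words_iff by (auto simp: reduced_words_iff)
  obtain x0 y0 where "x0 \<in> reduced_words n \<sigma>" "y0 \<in> reduced_words n \<rho>"
    using q ex_in_reduced_words by (fastforce simp: reduced_factorizations_def)
  then show ?thesis
    using fc append unfolding fully_commutative_def
    by (metis append.assoc append_Cons append_Nil)
qed

lemma Delta_perm_vec_in_tensor_sq_PiFC:
  assumes "fully_commutative n \<pi>"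
  shows "Delta (perm_vec n \<pi> :: 'k::field vec) \<in> tensor_sq PiFC"
  unfolding Delta_perm_vec tensor_sq_def
proof (rule lin_span_sum[OF finite_reduced_factorizations])
  fix q assume q: "q \<in> reduced_factorizations n \<pi>"
  obtain \<sigma> \<rho> where \<sigma>\<rho>: "q = (\<sigma>, \<rho>)" by fastforce
  then have "perm_vec n \<sigma> \<in> PiFC" "perm_vec n \<rho> \<in> PiFC"
    using q fully_commutative_reduced_factorization[OF assms]
    by (auto simp: reduced_factorizations_def intro!: perm_vec_in_PiFC)
  then show "tensor (perm_vec n (fst q)) (perm_vec n (snd q)) \<in>
      lin_span {tensor x y |x y. x \<in> PiFC \<and> y \<in> PiFC}"
    using \<sigma>\<rho> by (intro lin_span_superset) auto
qed

lemma homog_perm_vec: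
  "homog d (perm_vec n p :: 'k::field vec) = (if inv_count p = d then perm_vec n p else (\<lambda>t. 0))"
proof
  fix t :: label
  obtain w k where "t = (w, k)" by fastforce
  moreover have "w \<in> reduced_words n p \<Longrightarrow> length w = inv_count p"
    by (auto simp: reduced_words_iff reduced_def)
  ultimately show "homog d (perm_vec n p :: 'k vec) t =
      (if inv_count p = d then perm_vec n p else (\<lambda>t. 0)) t"
    by (auto simp: homog_def perm_vec_apply)
qed

lemma unit_vec_in_PiFC: "unit_vec \<in> PiFC"
proof -
  have "reduced_words 0 id = {[]}" by (auto simp: reduced_words_iff)
  then have "perm_vec 0 id = unit_vec"
    by (auto simp: fun_eq_iff perm_vec_apply unit_vec_def bvec_def)
  moreover have "fully_commutative 0 id"
    by (simp add: fully_commutative_def \<open>reduced_words 0 id = {[]}\<close>)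
  ultimately show ?thesis by (metis permutes_id perm_vec_in_PiFC)
qed

lemma homog_in_PiFC: "x \<in> PiFC \<Longrightarrow> homog d x \<in> PiFC"
  unfolding PiFC_eq_lin_span
  by (rule homog_in_lin_span)
    (auto elim!: PiFC_gensE simp: homog_perm_vec lin_span_zero
      perm_vec_in_PiFC[unfolded PiFC_eq_lin_span])

lemma nabla_in_PiFC: "x \<in> PiFC \<Longrightarrow> y \<in> PiFC \<Longrightarrow> nabla x y \<in> PiFC"
  unfolding PiFC_eq_lin_span
  by (rule nabla_in_lin_span)
    (auto elim!: PiFC_gensE simp: finite_supp_perm_vec
      nabla_perm_vec_in_PiFC[unfolded PiFC_eq_lin_span])

lemma Delta_in_tensor_sq_PiFC: "x \<in> PiFC \<Longrightarrow> Delta x \<in> tensor_sq PiFC"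
  unfolding Delta_eq_linear_ext tensor_sq_def
  by (rule linear_ext_in_lin_span[of x PiFC_gens])
    (auto elim!: PiFC_gensE simp: PiFC_eq_lin_span[symmetric] finite_supp_perm_vec
      Delta_perm_vec_in_tensor_sq_PiFC[unfolded tensor_sq_def Delta_eq_linear_ext])

theorem corollary4p12:
  shows "graded_sub_bialgebra (PiFC :: 'k::field vec set)"
  unfolding graded_sub_bialgebra_def
proof (intro conjI ballI allI)
  show "PiFC \<subseteq> (Pi_space :: 'k vec set)"
    unfolding PiFC_def Pi_space_def by (rule lin_span_mono) blast
  show "(\<lambda>t. 0) \<in> (PiFC :: 'k vec set)"
    by (simp add: PiFC_def lin_span_zero)
  fix x y :: "'k vec" and c :: 'k and d :: nat
  assume x: "x \<in> PiFC"
  then show "(\<lambda>t. c * x t) \<in> PiFC" unfolding PiFC_def by (rule lin_span_scale)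
  show "homog d x \<in> PiFC" using x by (rule homog_in_PiFC)
  show "Delta x \<in> tensor_sq PiFC" using x by (rule Delta_in_tensor_sq_PiFC)
  assume y: "y \<in> PiFC"
  show "(\<lambda>t. x t + y t) \<in> PiFC" using x y unfolding PiFC_def by (rule lin_span_add)
  show "nabla x y \<in> PiFC" using x y by (rule nabla_in_PiFC)
qed (rule unit_vec_in_PiFC)

end
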